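(* Let $d\ge1$, $\sigma>0$, and let $A_0,A_1\in\mathbb{R}^{d\times d}$ be constant matrices with $A_0A_1\ne A_1A_0$. Let $\Psi:[-\sigma,0]\to\mathbb{R}^{d\times d}$ be continuously differentiable with $A_1\Psi(\vartheta)=\Psi(\vartheta)A_1$ for all $\vartheta\in[-\sigma,0]$. Let $Z$ be the function defined in the context. Then \[ X(\vartheta)=Z(\vartheta)\Psi(-\sigma)+\int_{-\sigma}^{0}Z(\vartheta-\sigma-s)\dot\Psi(s)\,ds,\qquad \vartheta\in[-\sigma,\infty), \] is a solution of \[ \dot X(\vartheta)=A_0X(\vartheta-\sigma)+X(\vartheta-\sigma)A_1,\ \ \vartheta\in[0,\infty),\qquad X(\vartheta)=\Psi(\vartheta),\ \ \vartheta\in[-\sigma,0]. \]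
   Context: $\Theta$ and $I$ denote the $d\times d$ zero and identity matrices. Define matrices $Q_{r+1}(r\sigma)$, $r=0,1,2,\dots$, recursively by $Q_1(0)=I$ and $Q_{r+1}(r\sigma)=A_0Q_r((r-1)\sigma)+Q_r((r-1)\sigma)A_1$ for $r\ge 1$. Define $Z:\mathbb{R}\to\mathbb{R}^{d\times d}$ by $Z(\vartheta)=\Theta$ for $\vartheta<-\sigma$, and, for each integer $u\ge 0$ and $\vartheta\in[(u-1)\sigma,u\sigma)$, \[ Z(\vartheta)=\sum_{r=0}^{u}Q_{r+1}(r\sigma)\frac{(\vartheta-(r-1)\sigma)^r}{r!}. \] *)

theory Defs
  imports "HOL-Analysis.Analysis"
begin

text \<open>Q r stands for the matrix Q_{r+1}(r sigma) of the paper.\<close>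
fun Qmat :: "real^'n^'n \<Rightarrow> real^'n^'n \<Rightarrow> nat \<Rightarrow> real^'n^'n" where
  "Qmat A0 A1 0 = mat 1"
| "Qmat A0 A1 (Suc r) = A0 ** Qmat A0 A1 r + Qmat A0 A1 r ** A1"

definition Zfun :: "real^'n^'n \<Rightarrow> real^'n^'n \<Rightarrow> real \<Rightarrow> real \<Rightarrow> real^'n^'n" where
  "Zfun A0 A1 \<sigma> \<theta> =
     (if \<theta> < - \<sigma> then 0
      else (\<Sum>r = 0..nat (\<lfloor>\<theta> / \<sigma>\<rfloor> + 1).
              ((\<theta> - (real r - 1) * \<sigma>) ^ r / fact r) *\<^sub>R Qmat A0 A1 r))"

end

theory Submission
  imports Defs
begin

text \<open>Z is a finite combination of the matrices Q_r with scalar kernels: Z(t) = sum_r g_r(t) Q_r,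
  where g_0 is the indicator of [-\<sigma>, \<infinity>) and g_(r+1)(t) = max(0, t - r\<sigma>)^(r+1) / (r+1)!.
  Hence X = sum_r Q_r K_r with K_r(\<theta>) = g_r(\<theta>) \<Psi>(-\<sigma>) + \<integral> g_r(\<theta> - \<sigma> - s) \<Psi>'(s) ds.
  Since g_(r+1)' = g_r(. - \<sigma>) (away from the kink of g_1 at 0), differentiating under the
  integral gives K_(r+1)' = K_r(. - \<sigma>) on [0, \<infinity>), while K_0(\<theta>) = \<Psi>(min \<theta> 0) is constant
  there and K_(r+1) vanishes on [-\<sigma>, 0]. As A1 commutes with \<Psi>, it commutes with \<Psi>' and with
  every K_r, so the recursion Q_(r+1) = A0 Q_r + Q_r A1 turns X' = sum_r Q_(r+1) K_r(\<theta> - \<sigma>)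
  into A0 X(\<theta> - \<sigma>) + X(\<theta> - \<sigma>) A1.\<close>

lemma bounded_linear_matrix_mult_left: "bounded_linear (\<lambda>B::real^'n^'m. A ** B)"
  by (auto intro!: bounded_linearI' simp: matrix_add_ldistrib matrix_scalar_ac scalar_matrix_assoc)

lemma matrix_add_rdistrib: "(B + C) ** A = B ** A + C ** A"
  for A :: "real^'n^'m" and B C :: "real^'m^'k"
  by (vector matrix_matrix_mult_def sum.distrib[symmetric] field_simps)

lemma bounded_linear_matrix_mult_right: "bounded_linear (\<lambda>B::real^'m^'k. B ** A)"
  by (auto intro!: bounded_linearI' simp: matrix_add_rdistrib scalar_matrix_assoc)

lemma matrix_mult_sum_left: "A ** (\<Sum>r\<in>S. f r) = (\<Sum>r\<in>S. A ** f r)"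
  for A :: "real^'m^'k" and f :: "'a \<Rightarrow> real^'n^'m"
  by (rule linear_sum[OF bounded_linear.linear[OF bounded_linear_matrix_mult_left]])

lemma matrix_mult_sum_right: "(\<Sum>r\<in>S. f r) ** A = (\<Sum>r\<in>S. f r ** A)"
  for A :: "real^'n^'m" and f :: "'a \<Rightarrow> real^'m^'k"
  by (rule linear_sum[OF bounded_linear.linear[OF bounded_linear_matrix_mult_right]])

lemma sum_Qmat_Suc_mult:
  assumes "\<And>r. r \<in> S \<Longrightarrow> A1 ** K r = K r ** A1"
  shows "(\<Sum>r\<in>S. Qmat A0 A1 (Suc r) ** K r)
    = A0 ** (\<Sum>r\<in>S. Qmat A0 A1 r ** K r) + (\<Sum>r\<in>S. Qmat A0 A1 r ** K r) ** A1"
proof -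
  have "Qmat A0 A1 (Suc r) ** K r = A0 ** (Qmat A0 A1 r ** K r) + (Qmat A0 A1 r ** K r) ** A1"
    if "r \<in> S" for r
    using assms[OF that]
    by (simp add: matrix_add_rdistrib matrix_mul_assoc[symmetric])
  then show ?thesis
    by (simp add: matrix_mult_sum_left matrix_mult_sum_right sum.distrib)
qed

lemma matrix_commute_has_vector_derivative:
  fixes f :: "real \<Rightarrow> real^'n^'n"
  assumes "a < b" "x \<in> {a..b}" "(f has_vector_derivative f') (at x within {a..b})"
    and "\<And>y. y \<in> {a..b} \<Longrightarrow> A ** f y = f y ** A"
  shows "A ** f' = f' ** A"
proof -
  have "((\<lambda>y. A ** f y - f y ** A) has_vector_derivative A ** f' - f' ** A) (at x within {a..b})"
    by (intro has_vector_derivative_diff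
        bounded_linear.has_vector_derivative[OF bounded_linear_matrix_mult_left]
        bounded_linear.has_vector_derivative[OF bounded_linear_matrix_mult_right] assms(3))
  moreover have "((\<lambda>y. A ** f y - f y ** A) has_vector_derivative 0) (at x within {a..b})"
    by (rule has_vector_derivative_transform[OF assms(2) _ has_vector_derivative_const])
      (simp add: assms(4))
  ultimately have "A ** f' - f' ** A = 0"
    using vector_derivative_unique_within_closed_interval assms(1,2) by fastforce
  then show ?thesis
    by simp
qed

lemma matrix_commute_integral:
  fixes f :: "'a::euclidean_space \<Rightarrow> real^'n^'n"
  assumes "f integrable_on S" "\<And>s. s \<in> S \<Longrightarrow> A ** f s = f s ** A"
  shows "A ** integral S f = integral S f ** A"
proof -
  have "A ** integral S f = integral S (\<lambda>s. A ** f s)"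
    by (rule integral_linear[OF assms(1) bounded_linear_matrix_mult_left, unfolded o_def, symmetric])
  also have "\<dots> = integral S (\<lambda>s. f s ** A)"
    using assms(2) by (rule integral_cong)
  also have "\<dots> = integral S f ** A"
    by (rule integral_linear[OF assms(1) bounded_linear_matrix_mult_right, unfolded o_def])
  finally show ?thesis .
qed

lemma has_real_derivative_pos_part_power:
  "((\<lambda>x. max 0 x ^ Suc (Suc n)) has_real_derivative real (Suc (Suc n)) * max 0 x ^ Suc n) (at x)"
proof -
  have power: "((\<lambda>x. x ^ Suc (Suc n)) has_vector_derivative real (Suc (Suc n)) * y ^ Suc n)
      (at y within S)" for y :: real and S
    using DERIV_pow[of "Suc (Suc n)" y] has_field_derivative_at_within
    by (simp add: has_real_derivative_iff_has_vector_derivative del: power_Suc)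
  have "((\<lambda>x. if x \<in> {..0} then 0 else x ^ Suc (Suc n)) has_vector_derivative
      (if x \<in> {..0} then 0 else real (Suc (Suc n)) * x ^ Suc n)) (at x within {..0} \<union> {0..})"
    by (rule has_vector_derivative_If_within_closures[where T="{0..}"])
      (auto simp del: power_Suc of_nat_Suc intro: power)
  moreover have "(\<lambda>x::real. if x \<in> {..0} then 0 else x ^ Suc (Suc n)) = (\<lambda>x. max 0 x ^ Suc (Suc n))"
    by (auto simp: max_def)
  moreover have "(if x \<in> {..0} then 0 else real (Suc (Suc n)) * x ^ Suc n)
      = real (Suc (Suc n)) * max 0 x ^ Suc n"
    by (simp add: max_def)
  moreover have "{..0} \<union> {0..} = (UNIV :: real set)"
    by auto
  ultimately show ?thesis
    by (simp only: has_real_derivative_iff_has_vector_derivative)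
qed

lemma has_vector_derivative_within_closed_Un:
  assumes "closed S" "closed T"
    and "x \<in> S \<Longrightarrow> (f has_vector_derivative f') (at x within S)"
    and "x \<in> T \<Longrightarrow> (f has_vector_derivative f') (at x within T)"
  shows "(f has_vector_derivative f') (at x within S \<union> T)"
proof -
  have "(f has_vector_derivative f') (at x within U)"
    if "closed U" "x \<in> U \<Longrightarrow> (f has_vector_derivative f') (at x within U)" for U
  proof (cases "x \<in> U")
    case False
    then have "at x within U = bot"
      using \<open>closed U\<close> closed_limpt trivial_limit_within by blast
    then show ?thesis
      by (simp add: has_vector_derivative_def has_derivative_bot bounded_linear_scaleR_left)
  qed (use that in simp)
  then show ?thesis
    using assms unfolding has_vector_derivative_def has_derivative_within Lim_within_Un by blast
qed

lemma has_vector_derivative_integral_kernel: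
  fixes f :: "real \<Rightarrow> 'a::banach"
  assumes "\<And>t. (h has_real_derivative h' t) (at t)" "continuous_on UNIV h'"
    and "continuous_on {a..b} f"
  shows "((\<lambda>x. integral {a..b} (\<lambda>s. h (x - s) *\<^sub>R f s)) has_vector_derivative
      integral {a..b} (\<lambda>s. h' (x - s) *\<^sub>R f s)) (at x)"
proof -
  have "continuous_on UNIV h"
    using assms(1) DERIV_isCont continuous_on_eq_continuous_at by blast
  have "((\<lambda>x. integral (cbox a b) (\<lambda>s. h (x - s) *\<^sub>R f s)) has_vector_derivative
      integral (cbox a b) (\<lambda>s. h' (x - s) *\<^sub>R f s)) (at x within UNIV)"
  proof (rule leibniz_rule_vector_derivative)
    show "((\<lambda>x. h (x - s) *\<^sub>R f s) has_vector_derivative h' (x - s) *\<^sub>R f s) (at x within UNIV)"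
      for x s
    proof -
      have "((\<lambda>x. x - s) has_real_derivative 1) (at x)"
        by (auto intro!: derivative_eq_intros)
      from has_vector_derivative_scaleR[OF DERIV_chain2[OF assms(1) this]
          has_vector_derivative_const[of "f s"]]
      show ?thesis
        by simp
    qed
    show "(\<lambda>s. h (x - s) *\<^sub>R f s) integrable_on cbox a b" for x
      by (rule integrable_continuous)
        (auto intro!: continuous_intros continuous_on_compose2[OF \<open>continuous_on UNIV h\<close>] assms(3))
    show "continuous_on (UNIV \<times> cbox a b) (\<lambda>(x, s). h' (x - s) *\<^sub>R f s)"
      by (auto simp: case_prod_beta intro!: continuous_intros continuous_on_compose2[OF assms(2)]
          continuous_on_compose2[OF assms(3)])
  qed auto
  then show ?thesis
    by simp
qed

lemma has_vector_derivative_integral_ramp: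
  fixes f :: "real \<Rightarrow> 'a::banach"
  assumes f: "continuous_on {a..b} f" and "a \<le> b"
  shows "((\<lambda>x. integral {a..b} (\<lambda>s. max 0 (x - s) *\<^sub>R f s)) has_vector_derivative
      integral {a..min c b} f) (at c within {a..})"
proof -
  \<comment> \<open>The kernel has a kink at s = x, so the Leibniz rule does not apply. Instead, with primitives
    F and G of f and s f, the integral equals x F(min x b) - G(min x b), whose derivative is
    F(min x b) on both sides of x = b.\<close>
  define F where "F m = integral {a..m} f" for m
  define G where "G m = integral {a..m} (\<lambda>s. s *\<^sub>R f s)" for m
  have ramp: "integral {a..b} (\<lambda>s. max 0 (x - s) *\<^sub>R f s) = x *\<^sub>R F (min x b) - G (min x b)"
    for x
  proof -
    have "continuous_on {a..min x b} f"
      by (rule continuous_on_subset[OF f]) auto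
    then have "f integrable_on {a..min x b}" "(\<lambda>s. s *\<^sub>R f s) integrable_on {a..min x b}"
      by (auto intro!: integrable_continuous_interval continuous_intros)
    then have "x *\<^sub>R F (min x b) - G (min x b) = integral {a..min x b} (\<lambda>s. (x - s) *\<^sub>R f s)"
      by (simp add: F_def G_def integral_diff integrable_cmul scaleR_diff_left)
    also have "\<dots> = integral {a..b} (\<lambda>s. if s \<in> {a..min x b} then (x - s) *\<^sub>R f s else 0)"
      by (simp only: integral_restrict_Int Int_absorb2 atLeastatMost_subset_iff) simp
    also have "\<dots> = integral {a..b} (\<lambda>s. max 0 (x - s) *\<^sub>R f s)"
      by (rule integral_cong) auto
    finally show ?thesis
      by simp
  qed
  have "((\<lambda>x. x *\<^sub>R F x - G x) has_vector_derivative F c) (at c within {a..b})" if "c \<in> {a..b}"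
  proof -
    have "(F has_vector_derivative f c) (at c within {a..b})"
      unfolding F_def by (rule integral_has_vector_derivative[OF f that])
    moreover have "(G has_vector_derivative c *\<^sub>R f c) (at c within {a..b})"
      unfolding G_def by (rule integral_has_vector_derivative[OF _ that]) (intro continuous_intros f)
    ultimately show ?thesis
      by (auto intro!: derivative_eq_intros)
  qed
  moreover have "((\<lambda>x. x *\<^sub>R F b - G b) has_vector_derivative F b) (at c within {b..})"
    by (auto intro!: derivative_eq_intros)
  ultimately have "((\<lambda>x. integral {a..b} (\<lambda>s. max 0 (x - s) *\<^sub>R f s)) has_vector_derivative
      F (min c b)) (at c within {a..b} \<union> {b..})"
    by (intro has_vector_derivative_within_closed_Un; simp only: ramp)
      (auto intro: has_vector_derivative_transform)
  moreover have "{a..b} \<union> {b..} = {a..}"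
    using \<open>a \<le> b\<close> by auto
  ultimately show ?thesis
    by (simp add: F_def)
qed

text \<open>Zcoeff \<sigma> r is the scalar coefficient of Q r in Z: on [(u-1)\<sigma>, u\<sigma>) it is the r-th summand of
  the definition of Z for r \<le> u and vanishes for r > u, so Z becomes a sum over any large enough
  fixed range of r.\<close>

fun Zcoeff :: "real \<Rightarrow> nat \<Rightarrow> real \<Rightarrow> real" where
  "Zcoeff \<sigma> 0 t = (if -\<sigma> \<le> t then 1 else 0)"
| "Zcoeff \<sigma> (Suc r) t = max 0 (t - real r * \<sigma>) ^ Suc r / fact (Suc r)"

lemma Zcoeff_eq_if:
  assumes "\<sigma> > 0" "(real u - 1) * \<sigma> \<le> t" "t < real u * \<sigma>"
  shows "Zcoeff \<sigma> r t = (if r \<le> u then (t - (real r - 1) * \<sigma>) ^ r / fact r else 0)"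
proof (cases r)
  case 0
  have "0 \<le> real u * \<sigma>"
    using assms(1) by simp
  then have "-\<sigma> \<le> t"
    using assms(2) by (simp add: left_diff_distrib)
  then show ?thesis
    using 0 by simp
next
  case (Suc k)
  show ?thesis
  proof (cases "k < u")
    case True
    then have "real k * \<sigma> \<le> (real u - 1) * \<sigma>"
      using assms(1) by (intro mult_right_mono) auto
    then show ?thesis
      using Suc True assms(2) by (simp add: max_absorb2)
  next
    case False
    then have "real u * \<sigma> \<le> real k * \<sigma>"
      using assms(1) by (intro mult_right_mono) auto
    then show ?thesis
      using Suc False assms(3) by (simp add: max_absorb1)
  qed
qed

lemma Zcoeff_below:
  assumes "\<sigma> \<ge> 0" "t < -\<sigma>"
  shows "Zcoeff \<sigma> r t = 0"
proof -
  have "t - real k * \<sigma> \<le> 0" for k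
    using assms mult_nonneg_nonneg[of "real k" \<sigma>] by linarith
  then show ?thesis
    using assms by (cases r) (simp_all add: max_absorb1)
qed

lemma Zfun_eq_sum_Zcoeff:
  assumes "\<sigma> > 0" "t < real N * \<sigma>"
  shows "Zfun A0 A1 \<sigma> t = (\<Sum>r=0..N. Zcoeff \<sigma> r t *\<^sub>R Qmat A0 A1 r)"
proof (cases "t < -\<sigma>")
  case True
  then show ?thesis
    using assms by (simp add: Zfun_def Zcoeff_below)
next
  case False
  define u where "u = nat (\<lfloor>t / \<sigma>\<rfloor> + 1)"
  have "-1 \<le> t / \<sigma>"
    using False assms by (simp add: field_simps)
  then have u: "real u = \<lfloor>t / \<sigma>\<rfloor> + 1"
    unfolding u_def by linarith
  then have "real u - 1 \<le> t / \<sigma>" "t / \<sigma> < real u"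
    by linarith+
  then have bounds: "(real u - 1) * \<sigma> \<le> t" "t < real u * \<sigma>"
    using assms by (simp_all add: field_simps)
  have "(real u - 1) * \<sigma> < real N * \<sigma>"
    using bounds assms by linarith
  then have "u \<le> N"
    using assms by (simp add: mult_less_cancel_right)
  have "(\<Sum>r=0..N. Zcoeff \<sigma> r t *\<^sub>R Qmat A0 A1 r) = (\<Sum>r=0..u. Zcoeff \<sigma> r t *\<^sub>R Qmat A0 A1 r)"
    by (rule sum.mono_neutral_right) (use \<open>u \<le> N\<close> in \<open>auto simp: Zcoeff_eq_if[OF assms(1) bounds]\<close>)
  also have "\<dots> = (\<Sum>r=0..u. ((t - (real r - 1) * \<sigma>) ^ r / fact r) *\<^sub>R Qmat A0 A1 r)"
    by (rule sum.cong) (simp_all add: Zcoeff_eq_if[OF assms(1) bounds])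
  finally show ?thesis
    using False by (simp add: Zfun_def u_def)
qed

lemma Zcoeff_Suc_nonpos:
  assumes "\<sigma> \<ge> 0" "t \<le> 0"
  shows "Zcoeff \<sigma> (Suc r) t = 0"
proof -
  have "t - real r * \<sigma> \<le> 0"
    using assms mult_nonneg_nonneg[of "real r" \<sigma>] by linarith
  then show ?thesis
    by (simp add: max_absorb1)
qed

lemma Zcoeff_has_real_derivative:
  "(Zcoeff \<sigma> (Suc (Suc r)) has_real_derivative Zcoeff \<sigma> (Suc r) (t - \<sigma>)) (at t)"
proof -
  have "((\<lambda>t. max 0 (t - real (Suc r) * \<sigma>) ^ Suc (Suc r)) has_real_derivative
      real (Suc (Suc r)) * max 0 (t - real (Suc r) * \<sigma>) ^ Suc r) (at t)"
  proof -
    have "((\<lambda>t. t - real (Suc r) * \<sigma>) has_real_derivative 1) (at t)"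
      by (auto intro!: derivative_eq_intros)
    from DERIV_chain2[OF has_real_derivative_pos_part_power this]
    show ?thesis
      by (simp only: mult_1_right)
  qed
  then have "(Zcoeff \<sigma> (Suc (Suc r)) has_real_derivative
      real (Suc (Suc r)) * max 0 (t - real (Suc r) * \<sigma>) ^ Suc r / fact (Suc (Suc r))) (at t)"
    unfolding Zcoeff.simps by (rule DERIV_cdivide)
  moreover have "real (Suc (Suc r)) * max 0 (t - real (Suc r) * \<sigma>) ^ Suc r / fact (Suc (Suc r))
      = Zcoeff \<sigma> (Suc r) (t - \<sigma>)"
  proof -
    have "t - \<sigma> - real r * \<sigma> = t - real (Suc r) * \<sigma>"
      by (simp add: algebra_simps)
    then show ?thesis
      by (simp only: Zcoeff.simps fact_Suc[of "Suc r"]) simp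
  qed
  ultimately show ?thesis
    by simp
qed

context
  fixes \<sigma> :: real and \<Psi> \<Psi>' :: "real \<Rightarrow> real^'n^'n"
  assumes \<sigma>_pos: "\<sigma> > 0"
    and \<Psi>_derivative: "\<And>s. s \<in> {-\<sigma>..0} \<Longrightarrow> (\<Psi> has_vector_derivative \<Psi>' s) (at s within {-\<sigma>..0})"
    and continuous_\<Psi>': "continuous_on {-\<sigma>..0} \<Psi>'"
begin

definition Xcoeff :: "nat \<Rightarrow> real \<Rightarrow> real^'n^'n" where
  "Xcoeff r \<theta> = Zcoeff \<sigma> r \<theta> *\<^sub>R \<Psi> (-\<sigma>) + integral {-\<sigma>..0} (\<lambda>s. Zcoeff \<sigma> r (\<theta> - \<sigma> - s) *\<^sub>R \<Psi>' s)"

lemma has_integral_Zcoeff_0: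
  "((\<lambda>s. Zcoeff \<sigma> 0 (\<theta> - \<sigma> - s) *\<^sub>R \<Psi>' s) has_integral integral {-\<sigma>..min \<theta> 0} \<Psi>') {-\<sigma>..0}"
proof -
  have "\<Psi>' integrable_on {-\<sigma>..min \<theta> 0}"
    by (rule integrable_continuous_interval, rule continuous_on_subset[OF continuous_\<Psi>']) auto
  then have "((\<lambda>s. if s \<in> {-\<sigma>..min \<theta> 0} then \<Psi>' s else 0) has_integral integral {-\<sigma>..min \<theta> 0} \<Psi>')
      {-\<sigma>..0}"
    by (subst has_integral_restrict) auto
  then show ?thesis
    by (rule has_integral_eq[rotated]) auto
qed

lemma integrable_Zcoeff_\<Psi>': "(\<lambda>s. Zcoeff \<sigma> r (\<theta> - \<sigma> - s) *\<^sub>R \<Psi>' s) integrable_on {-\<sigma>..0}"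
proof (cases r)
  case 0
  then show ?thesis
    using has_integral_Zcoeff_0 by blast
next
  case (Suc k)
  show ?thesis
    unfolding Suc Zcoeff.simps
    by (intro integrable_continuous_interval continuous_intros continuous_\<Psi>') auto
qed

lemma Xcoeff_0_eq_integral:
  assumes "\<theta> \<ge> -\<sigma>"
  shows "Xcoeff 0 \<theta> = \<Psi> (-\<sigma>) + integral {-\<sigma>..min \<theta> 0} \<Psi>'"
  using assms has_integral_Zcoeff_0[THEN integral_unique] by (simp add: Xcoeff_def)

lemma Xcoeff_0:
  assumes "\<theta> \<ge> -\<sigma>"
  shows "Xcoeff 0 \<theta> = \<Psi> (min \<theta> 0)"
proof -
  have "(\<Psi>' has_integral \<Psi> (min \<theta> 0) - \<Psi> (-\<sigma>)) {-\<sigma>..min \<theta> 0}"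
    using assms \<sigma>_pos
    by (intro fundamental_theorem_of_calculus has_vector_derivative_within_subset[OF \<Psi>_derivative]) auto
  then show ?thesis
    using assms by (simp add: Xcoeff_0_eq_integral integral_unique)
qed

lemma Xcoeff_Suc_nonpos:
  assumes "\<theta> \<le> 0"
  shows "Xcoeff (Suc r) \<theta> = 0"
proof -
  have vanish: "Zcoeff \<sigma> (Suc r) t = 0" if "t \<le> \<theta>" for t
    using Zcoeff_Suc_nonpos \<sigma>_pos assms that by simp
  then have "integral {-\<sigma>..0} (\<lambda>s. Zcoeff \<sigma> (Suc r) (\<theta> - \<sigma> - s) *\<^sub>R \<Psi>' s) = integral {-\<sigma>..0} (\<lambda>_. 0)"
    by (intro integral_cong) simp
  then show ?thesis
    using vanish by (simp add: Xcoeff_def)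
qed

lemma Zfun_convolution_eq_sum_Xcoeff:
  assumes "\<theta> < real N * \<sigma>"
  shows "Zfun A0 A1 \<sigma> \<theta> ** \<Psi> (-\<sigma>) + integral {-\<sigma>..0} (\<lambda>s. Zfun A0 A1 \<sigma> (\<theta> - \<sigma> - s) ** \<Psi>' s)
    = (\<Sum>r=0..N. Qmat A0 A1 r ** Xcoeff r \<theta>)"
proof -
  have Zfun_mult: "Zfun A0 A1 \<sigma> t ** M = (\<Sum>r=0..N. Qmat A0 A1 r ** (Zcoeff \<sigma> r t *\<^sub>R M))"
    if "t < real N * \<sigma>" for t M
    by (simp add: Zfun_eq_sum_Zcoeff[OF \<sigma>_pos that] matrix_mult_sum_right matrix_scalar_ac
        scalar_matrix_assoc)
  have "integral {-\<sigma>..0} (\<lambda>s. Zfun A0 A1 \<sigma> (\<theta> - \<sigma> - s) ** \<Psi>' s)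
      = integral {-\<sigma>..0} (\<lambda>s. \<Sum>r=0..N. Qmat A0 A1 r ** (Zcoeff \<sigma> r (\<theta> - \<sigma> - s) *\<^sub>R \<Psi>' s))"
    using assms by (intro integral_cong Zfun_mult) auto
  also have "\<dots> = (\<Sum>r=0..N. integral {-\<sigma>..0} (\<lambda>s. Qmat A0 A1 r ** (Zcoeff \<sigma> r (\<theta> - \<sigma> - s) *\<^sub>R \<Psi>' s)))"
    by (intro integral_sum finite_atLeastAtMost
        integrable_linear[OF integrable_Zcoeff_\<Psi>' bounded_linear_matrix_mult_left, unfolded o_def])
  also have "\<dots> = (\<Sum>r=0..N. Qmat A0 A1 r ** integral {-\<sigma>..0} (\<lambda>s. Zcoeff \<sigma> r (\<theta> - \<sigma> - s) *\<^sub>R \<Psi>' s))"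
    by (intro sum.cong refl)
      (rule integral_linear[OF integrable_Zcoeff_\<Psi>' bounded_linear_matrix_mult_left, unfolded o_def])
  finally show ?thesis
    using Zfun_mult[OF assms]
    by (simp add: Xcoeff_def matrix_add_ldistrib sum.distrib)
qed

lemma Xcoeff_1_has_vector_derivative:
  assumes "\<theta> \<ge> 0"
  shows "(Xcoeff 1 has_vector_derivative Xcoeff 0 (\<theta> - \<sigma>)) (at \<theta> within {0..})"
proof -
  define ramp where "ramp c = integral {-\<sigma>..0} (\<lambda>s. max 0 (c - s) *\<^sub>R \<Psi>' s)" for c
  have "(ramp has_vector_derivative integral {-\<sigma>..min (\<theta> - \<sigma>) 0} \<Psi>') (at (\<theta> - \<sigma>) within {-\<sigma>..})"
    unfolding ramp_def using \<sigma>_pos by (intro has_vector_derivative_integral_ramp continuous_\<Psi>') auto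
  moreover have "(\<lambda>x. x - \<sigma>) ` {0..} = {-\<sigma>..}"
    by (auto intro: image_eqI[where x="_ + \<sigma>"])
  moreover have "((\<lambda>x. x - \<sigma>) has_vector_derivative 1) (at \<theta> within {0..})"
    by (auto simp: has_real_derivative_iff_has_vector_derivative[symmetric] intro!: derivative_eq_intros)
  ultimately have "((\<lambda>x. ramp (x - \<sigma>)) has_vector_derivative integral {-\<sigma>..min (\<theta> - \<sigma>) 0} \<Psi>')
      (at \<theta> within {0..})"
    using vector_diff_chain_within[of "\<lambda>x. x - \<sigma>" 1 \<theta> "{0..}" ramp] by (simp add: o_def)
  moreover have "((\<lambda>x. x *\<^sub>R \<Psi> (-\<sigma>)) has_vector_derivative \<Psi> (-\<sigma>)) (at \<theta> within {0..})"
    by (auto intro!: derivative_eq_intros)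
  moreover have "Xcoeff 1 x = x *\<^sub>R \<Psi> (-\<sigma>) + ramp (x - \<sigma>)" if "x \<in> {0..}" for x
    using that by (simp add: Xcoeff_def ramp_def)
  ultimately show ?thesis
    using assms \<sigma>_pos Xcoeff_0_eq_integral[of "\<theta> - \<sigma>"]
    by (auto intro: has_vector_derivative_transform derivative_eq_intros)
qed

lemma Xcoeff_Suc_Suc_has_vector_derivative:
  "(Xcoeff (Suc (Suc r)) has_vector_derivative Xcoeff (Suc r) (\<theta> - \<sigma>)) (at \<theta>)"
proof -
  have kernel_deriv: "((\<lambda>t. Zcoeff \<sigma> (Suc (Suc r)) (t - \<sigma>)) has_real_derivative
      Zcoeff \<sigma> (Suc r) (t - \<sigma> - \<sigma>)) (at t)" for t
  proof -
    have "((\<lambda>t. t - \<sigma>) has_real_derivative 1) (at t)"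
      by (auto intro!: derivative_eq_intros)
    from DERIV_chain2[OF Zcoeff_has_real_derivative this]
    show ?thesis
      by (simp only: mult_1_right)
  qed
  have kernel_cont: "continuous_on UNIV (\<lambda>t. Zcoeff \<sigma> (Suc r) (t - \<sigma> - \<sigma>))"
    unfolding Zcoeff.simps by (intro continuous_intros) auto
  have "((\<lambda>x. integral {-\<sigma>..0} (\<lambda>s. Zcoeff \<sigma> (Suc (Suc r)) (x - \<sigma> - s) *\<^sub>R \<Psi>' s))
      has_vector_derivative integral {-\<sigma>..0} (\<lambda>s. Zcoeff \<sigma> (Suc r) (\<theta> - \<sigma> - \<sigma> - s) *\<^sub>R \<Psi>' s))
      (at \<theta>)"
    using has_vector_derivative_integral_kernel[OF kernel_deriv kernel_cont continuous_\<Psi>', of \<theta>]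
    by (simp add: algebra_simps)
  from has_vector_derivative_add[OF has_vector_derivative_scaleR[OF Zcoeff_has_real_derivative
        has_vector_derivative_const[of "\<Psi> (-\<sigma>)"]] this]
  show ?thesis
    by (simp add: Xcoeff_def[abs_def] del: Zcoeff.simps)
qed

lemma Xcoeff_Suc_has_vector_derivative:
  assumes "\<theta> \<ge> 0"
  shows "(Xcoeff (Suc r) has_vector_derivative Xcoeff r (\<theta> - \<sigma>)) (at \<theta> within {0..})"
proof (cases r)
  case 0
  then show ?thesis
    using Xcoeff_1_has_vector_derivative[OF assms] by simp
next
  case (Suc n)
  then show ?thesis
    using Xcoeff_Suc_Suc_has_vector_derivative has_vector_derivative_at_within by blast
qed

lemma Xcoeff_commute:
  assumes "\<And>\<theta>. \<theta> \<in> {-\<sigma>..0} \<Longrightarrow> A ** \<Psi> \<theta> = \<Psi> \<theta> ** A"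
  shows "A ** Xcoeff r \<theta> = Xcoeff r \<theta> ** A"
proof -
  have "A ** \<Psi>' s = \<Psi>' s ** A" if "s \<in> {-\<sigma>..0}" for s
    by (rule matrix_commute_has_vector_derivative[OF _ that \<Psi>_derivative[OF that] assms])
      (use \<sigma>_pos in simp)
  then have "A ** integral {-\<sigma>..0} (\<lambda>s. Zcoeff \<sigma> r (\<theta> - \<sigma> - s) *\<^sub>R \<Psi>' s)
      = integral {-\<sigma>..0} (\<lambda>s. Zcoeff \<sigma> r (\<theta> - \<sigma> - s) *\<^sub>R \<Psi>' s) ** A"
    by (intro matrix_commute_integral integrable_Zcoeff_\<Psi>')
      (simp add: matrix_scalar_ac scalar_matrix_assoc[symmetric])
  moreover have "A ** \<Psi> (-\<sigma>) = \<Psi> (-\<sigma>) ** A"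
    using assms \<sigma>_pos by simp
  ultimately show ?thesis
    by (simp add: Xcoeff_def matrix_add_ldistrib matrix_add_rdistrib matrix_scalar_ac
        scalar_matrix_assoc[symmetric])
qed

lemma has_vector_derivative_eq_sum_Xcoeff:
  fixes Q :: "nat \<Rightarrow> real^'n^'n"
  assumes "0 \<le> \<theta>" "\<theta> < real (Suc M) * \<sigma>"
    and Y: "\<And>x. 0 \<le> x \<Longrightarrow> x < real (Suc M) * \<sigma> \<Longrightarrow> Y x = (\<Sum>r=0..Suc M. Q r ** Xcoeff r x)"
  shows "(Y has_vector_derivative (\<Sum>r=0..M. Q (Suc r) ** Xcoeff r (\<theta> - \<sigma>))) (at \<theta> within {0..})"
proof -
  have "((\<lambda>x. (\<Sum>r=0..M. Q (Suc r) ** Xcoeff (Suc r) x) + Q 0 ** \<Psi> 0) has_vector_derivative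
      (\<Sum>r=0..M. Q (Suc r) ** Xcoeff r (\<theta> - \<sigma>))) (at \<theta> within {0..})"
    unfolding has_vector_derivative_add_const
    by (intro has_vector_derivative_sum Xcoeff_Suc_has_vector_derivative assms
        bounded_linear.has_vector_derivative[OF bounded_linear_matrix_mult_left])
  then show ?thesis
  proof (rule has_vector_derivative_transform_within)
    show "0 < real (Suc M) * \<sigma> - \<theta>" "\<theta> \<in> {0..}"
      using assms(1,2) by auto
    fix x
    assume "x \<in> {0..}" "dist x \<theta> < real (Suc M) * \<sigma> - \<theta>"
    then have "0 \<le> x" "x < real (Suc M) * \<sigma>"
      by (auto simp: dist_real_def)
    then have "Y x = Q 0 ** Xcoeff 0 x + (\<Sum>r=0..M. Q (Suc r) ** Xcoeff (Suc r) x)"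
      by (simp only: Y sum.atLeast0_atMost_Suc_shift o_def)
    then show "(\<Sum>r=0..M. Q (Suc r) ** Xcoeff (Suc r) x) + Q 0 ** \<Psi> 0 = Y x"
      using \<open>0 \<le> x\<close> \<sigma>_pos by (simp add: Xcoeff_0)
  qed
qed

end

theorem theorem4:
  fixes A0 A1 :: "real^'n^'n" and \<sigma> :: real
    and \<Psi> \<Psi>' X :: "real \<Rightarrow> real^'n^'n"
  assumes "\<sigma> > 0"
    and "A0 ** A1 \<noteq> A1 ** A0"
    and "\<And>s. s \<in> {-\<sigma>..0} \<Longrightarrow> (\<Psi> has_vector_derivative \<Psi>' s) (at s within {-\<sigma>..0})"
    and "continuous_on {-\<sigma>..0} \<Psi>'"
    and "\<And>\<theta>. \<theta> \<in> {-\<sigma>..0} \<Longrightarrow> A1 ** \<Psi> \<theta> = \<Psi> \<theta> ** A1"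
    and "\<And>\<theta>. \<theta> \<ge> -\<sigma> \<Longrightarrow> X \<theta> = Zfun A0 A1 \<sigma> \<theta> ** \<Psi> (-\<sigma>)
           + integral {-\<sigma>..0} (\<lambda>s. Zfun A0 A1 \<sigma> (\<theta> - \<sigma> - s) ** \<Psi>' s)"
  shows "(\<forall>\<theta>\<ge>0. (X has_vector_derivative (A0 ** X (\<theta> - \<sigma>) + X (\<theta> - \<sigma>) ** A1))
            (at \<theta> within {0..}))
       \<and> (\<forall>\<theta>\<in>{-\<sigma>..0}. X \<theta> = \<Psi> \<theta>)"
proof safe
  let ?K = "Xcoeff \<sigma> \<Psi> \<Psi>'" and ?Q = "Qmat A0 A1"
  have X_sum: "X \<theta> = (\<Sum>r=0..N. ?Q r ** ?K r \<theta>)" if "-\<sigma> \<le> \<theta>" "\<theta> < real N * \<sigma>" for \<theta> N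
    using Zfun_convolution_eq_sum_Xcoeff[OF assms(1,3,4) that(2)] assms(6)[OF that(1)] by simp
  show "X \<theta> = \<Psi> \<theta>" if "\<theta> \<in> {-\<sigma>..0}" for \<theta>
    using that X_sum[of \<theta> 1] assms(1) Xcoeff_0[OF assms(1,3,4)] Xcoeff_Suc_nonpos[OF assms(1,3,4)]
    by simp
  show "(X has_vector_derivative A0 ** X (\<theta> - \<sigma>) + X (\<theta> - \<sigma>) ** A1) (at \<theta> within {0..})"
    if "0 \<le> \<theta>" for \<theta>
  proof -
    obtain M where M: "\<theta> - \<sigma> < real M * \<sigma>"
      using ex_less_of_nat_mult[OF assms(1)] by blast
    then have "(X has_vector_derivative (\<Sum>r=0..M. ?Q (Suc r) ** ?K r (\<theta> - \<sigma>))) (at \<theta> within {0..})"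
      using that assms(1)
      by (intro has_vector_derivative_eq_sum_Xcoeff[OF assms(1,3,4)] X_sum) (auto simp: algebra_simps)
    moreover have "X (\<theta> - \<sigma>) = (\<Sum>r=0..M. ?Q r ** ?K r (\<theta> - \<sigma>))"
      using that M by (intro X_sum) auto
    ultimately show ?thesis
      by (simp only: sum_Qmat_Suc_mult Xcoeff_commute[OF assms(1,3,4,5)])
  qed
qed

end
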